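(* Let $v=(v_l,v_h)$ be a valuation profile and let $\sigma=(\sigma_l,\sigma_h)$ be a Nash equilibrium of the winner-bid auction game $WB(v)$. Let $\{\sigma^\lambda\}_{\lambda\in\mathbb{N}}$ be a sequence of mixed-strategy profiles, each weakly payoff-monotone for $WB(v)$, such that $\sigma^\lambda\to\sigma$ as $\lambda\to\infty$. Let $$t(v)\equiv\max\{2c_h/3-c_l,\ ES(v)/3\}+1.$$ Then there exists $\Lambda\in\mathbb{N}$ such that for each $\lambda\geq\Lambda$: (1) if $v_l\geq v_h/3$, then $E_{\sigma^\lambda_l}(b)<c_l+1$; (2) $c_l-1<E_{\sigma^\lambda_h}(b)<c_l+t(v)$; (3) $\pi_l(\sigma^\lambda)<c_l+t(v)$ and $\pi_h(\sigma^\lambda)>c_h+(ES(v)-t(v))$; (4) if $\pi_l(\sigma)>c_l$, then $E_{\sigma^\lambda_l}(b)<E_{\sigma^\lambda_h}(b)$.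
   Context: Two agents $l,h$ jointly own an indivisible good. Agent $i\in\{l,h\}$ has valuation $v_i$; valuations are even nonnegative integers bounded by a maximum valuation $\overline{v}$, with $v_l<v_h$; write $v=(v_l,v_h)$. Agent $i$'s utility from receiving the object and paying $p$ to the other agent is $v_i-p$; from not receiving the object and receiving transfer $p$ it is $p$; agents are expected-utility maximizers. Net valuations are $c_i\equiv v_i/2$ (integers), and the equity surplus is $ES(v)\equiv c_h-c_l$. The bid set is $\mathcal{B}=\{0,1,\dots,\overline{p}\}$ with $\overline{p}$ an integer, $\overline{p}\geq\overline{v}/2$. For $\alpha\in[0,1]$, the $\alpha$-auction (with tie-breaker favoring $h$) is: each agent simultaneously chooses a bid in $\mathcal{B}$; the agent with the strictly higher bid receives the object, and in case of a tie agent $h$ receives the object; the agent receiving the object pays $\alpha\cdot(\text{winner's bid})+(1-\alpha)\cdot(\text{loser's bid})$ to the other agent. The winner-bid auction $WB$ is $\alpha=1$; $WB(v)$ denotes the induced complete-information game with valuations $v$. A mixed strategy of agent $i$ is $\sigma_i\in\Delta(\mathcal{B})$; $E_{\sigma_i}(b)=\sum_{b\in\mathcal{B}}\sigma_i(b)\,b$ is agent $i$'s expected bid; $\pi_i(\sigma)$ is agent $i$'s expected utility under the profile $\sigma=(\sigma_l,\sigma_h)$. A Nash equilibrium is a profile in which each agent's strategy puts positive probability only on bids maximizing her expected utility given the other agent's strategy. A profile $\sigma$ is weakly payoff-monotone for the game if for each agent $i$ and each pair of bids $b,d\in\mathcal{B}$, $\sigma_i(b)>\sigma_i(d)$ implies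 that the expected utility of bid $b$ for agent $i$ against $\sigma_{-i}$ is strictly greater than that of bid $d$. Convergence $\sigma^\lambda\to\sigma$ is pointwise convergence of the probability vectors. *)

theory Defs
  imports Complex_Main
begin

datatype agent = L | H

fun other :: "agent \<Rightarrow> agent" where
  "other L = H" | "other H = L"

fun val :: "nat \<times> nat \<Rightarrow> agent \<Rightarrow> real" where
  "val (vl, vh) L = real vl" | "val (vl, vh) H = real vh"

definition auction_util :: "real \<Rightarrow> nat \<times> nat \<Rightarrow> agent \<Rightarrow> nat \<Rightarrow> nat \<Rightarrow> real" where
  "auction_util \<alpha> v i b d =
     (let bl = (if i = L then b else d); bh = (if i = L then d else b);
          pay = (if bl \<le> bh then \<alpha> * real bh + (1 - \<alpha>) * real bl
                 else \<alpha> * real bl + (1 - \<alpha>) * real bh);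
          winner = (if bl \<le> bh then H else L)
      in if i = winner then val v i - pay else pay)"

definition mixed :: "nat \<Rightarrow> (nat \<Rightarrow> real) \<Rightarrow> bool" where
  "mixed pbar s \<longleftrightarrow> (\<forall>b. 0 \<le> s b) \<and> (\<forall>b>pbar. s b = 0) \<and> (\<Sum>b\<in>{0..pbar}. s b) = 1"

type_synonym profile = "agent \<Rightarrow> nat \<Rightarrow> real"

definition mixed_profile :: "nat \<Rightarrow> profile \<Rightarrow> bool" where
  "mixed_profile pbar \<sigma> \<longleftrightarrow> mixed pbar (\<sigma> L) \<and> mixed pbar (\<sigma> H)"

definition bid_util :: "real \<Rightarrow> nat \<Rightarrow> nat \<times> nat \<Rightarrow> agent \<Rightarrow> nat \<Rightarrow> (nat \<Rightarrow> real) \<Rightarrow> real" where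
  "bid_util \<alpha> pbar v i b s = (\<Sum>d\<in>{0..pbar}. s d * auction_util \<alpha> v i b d)"

definition payoff :: "real \<Rightarrow> nat \<Rightarrow> nat \<times> nat \<Rightarrow> profile \<Rightarrow> agent \<Rightarrow> real" where
  "payoff \<alpha> pbar v \<sigma> i = (\<Sum>b\<in>{0..pbar}. \<sigma> i b * bid_util \<alpha> pbar v i b (\<sigma> (other i)))"

definition exp_bid :: "nat \<Rightarrow> (nat \<Rightarrow> real) \<Rightarrow> real" where
  "exp_bid pbar s = (\<Sum>b\<in>{0..pbar}. s b * real b)"

definition nash :: "real \<Rightarrow> nat \<Rightarrow> nat \<times> nat \<Rightarrow> profile \<Rightarrow> bool" where
  "nash \<alpha> pbar v \<sigma> \<longleftrightarrow> mixed_profile pbar \<sigma> \<and>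
     (\<forall>i. \<forall>b\<in>{0..pbar}. \<sigma> i b > 0 \<longrightarrow>
        (\<forall>d\<in>{0..pbar}. bid_util \<alpha> pbar v i d (\<sigma> (other i)) \<le> bid_util \<alpha> pbar v i b (\<sigma> (other i))))"

definition weakly_payoff_monotone :: "real \<Rightarrow> nat \<Rightarrow> nat \<times> nat \<Rightarrow> profile \<Rightarrow> bool" where
  "weakly_payoff_monotone \<alpha> pbar v \<sigma> \<longleftrightarrow>
     (\<forall>i. \<forall>b\<in>{0..pbar}. \<forall>d\<in>{0..pbar}. \<sigma> i b > \<sigma> i d \<longrightarrow>
        bid_util \<alpha> pbar v i b (\<sigma> (other i)) > bid_util \<alpha> pbar v i d (\<sigma> (other i)))"

definition WB_alpha :: real where "WB_alpha = 1"

end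

theory Submission
  imports Defs
begin

text \<open>
  In the limit equilibrium \<open>\<sigma>\<close>, agent h bids a single value B, the top of l's support,
  and B \<ge> c_l: bidding c_l guarantees l at least c_l, bidding B guarantees h exactly
  v_h - B, and the two payoffs sum to at most v_h. Hence l's payoff is B and h's is v_h - B.
  The bound B < c_l + t(v) is read off a late perturbation \<open>\<sigma>^\<lambda>\<close>, where h strictly prefers
  B to B - 1: h's gain from that raise shows that l's mass below B is less than
  \<open>\<sigma>_l(B)(v_h - 2B)\<close>, while payoff-monotonicity, applied through reflections about
  v_l - B, forces l to put at least \<open>\<sigma>_l(B)\<close> on roughly 4(B - c_l) bids below B.
  Expected bids and payoffs are continuous in the profile, so the strict inequalities
  satisfied by \<open>\<sigma>\<close> persist along the sequence.
\<close>

lemma auction_util_WB_L: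
  "auction_util WB_alpha (vl, vh) L b d = (if b \<le> d then real d else real vl - real b)"
  by (simp add: auction_util_def WB_alpha_def Let_def)

lemma auction_util_WB_H:
  "auction_util WB_alpha (vl, vh) H b d = (if d \<le> b then real vh - real b else real d)"
  by (auto simp add: auction_util_def WB_alpha_def Let_def)

lemma mixed_nonneg: "mixed pbar s \<Longrightarrow> 0 \<le> s x"
  and mixed_vanishes: "mixed pbar s \<Longrightarrow> pbar < x \<Longrightarrow> s x = 0"
  and mixed_sum: "mixed pbar s \<Longrightarrow> (\<Sum>x\<in>{0..pbar}. s x) = 1"
  by (simp_all add: mixed_def)

lemma mixed_profileD: "mixed_profile pbar \<sigma> \<Longrightarrow> mixed pbar (\<sigma> i)"
  by (cases i) (simp_all add: mixed_profile_def)

lemma sum_mixed_const: "mixed pbar s \<Longrightarrow> (\<Sum>x\<in>{0..pbar}. s x * c) = c"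
  by (simp add: sum_distrib_right[symmetric] mixed_sum)

lemma sum_mixed_ge:
  assumes "mixed pbar s" and "\<And>x. x \<le> pbar \<Longrightarrow> 0 < s x \<Longrightarrow> c \<le> f x"
  shows "c \<le> (\<Sum>x\<in>{0..pbar}. s x * f x)"
proof -
  have "(\<Sum>x\<in>{0..pbar}. s x * c) \<le> (\<Sum>x\<in>{0..pbar}. s x * f x)"
  proof (rule sum_mono)
    fix x assume "x \<in> {0..pbar}"
    then show "s x * c \<le> s x * f x"
      using assms mixed_nonneg[OF assms(1), of x] by (cases "s x = 0") (auto intro: mult_left_mono)
  qed
  then show ?thesis by (simp add: sum_mixed_const[OF assms(1)])
qed

lemma sum_if_mem_subset:
  fixes n :: nat
  assumes "A \<subseteq> {0..n}"
  shows "(\<Sum>x\<in>{0..n}. if x \<in> A then f x else 0) = sum f A"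
proof -
  have "sum f A = sum f ({0..n} \<inter> A)" using assms by (simp add: Int_absorb1)
  also have "\<dots> = (\<Sum>x\<in>{0..n}. if x \<in> A then f x else 0)" by (rule sum.inter_restrict) simp
  finally show ?thesis by (rule sym)
qed

lemma bid_util_diff:
  "bid_util a pbar v i b s - bid_util a pbar v i d s
     = (\<Sum>x\<in>{0..pbar}. s x * (auction_util a v i b x - auction_util a v i d x))"
  by (simp add: bid_util_def sum_subtractf[symmetric] algebra_simps)

lemma weakly_payoff_monotoneD:
  assumes "weakly_payoff_monotone a pbar v \<tau>" "b \<le> pbar" "d \<le> pbar" "\<tau> i d < \<tau> i b"
  shows "bid_util a pbar v i d (\<tau> (other i)) < bid_util a pbar v i b (\<tau> (other i))"
  using assms unfolding weakly_payoff_monotone_def by auto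

lemma weakly_payoff_monotone_le:
  assumes "weakly_payoff_monotone a pbar v \<tau>" "b \<le> pbar" "d \<le> pbar"
    and "bid_util a pbar v i b (\<tau> (other i)) \<le> bid_util a pbar v i d (\<tau> (other i))"
  shows "\<tau> i b \<le> \<tau> i d"
  by (meson assms(4) leD not_le weakly_payoff_monotoneD[OF assms(1,2,3)])

lemma nashD:
  assumes "nash a pbar v \<sigma>" "0 < \<sigma> i b" "b \<le> pbar" "d \<le> pbar"
  shows "bid_util a pbar v i d (\<sigma> (other i)) \<le> bid_util a pbar v i b (\<sigma> (other i))"
  using assms unfolding nash_def by auto

lemma bid_util_L_dominated:
  assumes "\<And>x. 0 \<le> q x" "d < b" "vl \<le> d + b"
  shows "bid_util WB_alpha pbar (vl, vh) L b q \<le> bid_util WB_alpha pbar (vl, vh) L d q"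
proof -
  have "bid_util WB_alpha pbar (vl, vh) L b q - bid_util WB_alpha pbar (vl, vh) L d q \<le> 0"
    unfolding bid_util_diff auction_util_WB_L
    by (rule sum_nonpos) (use assms in \<open>auto intro!: mult_nonneg_nonpos\<close>)
  then show ?thesis by simp
qed

lemma wpm_L_antimono:
  assumes "weakly_payoff_monotone WB_alpha pbar (vl, vh) \<tau>" "mixed_profile pbar \<tau>"
    and "d < b" "b \<le> pbar" "vl \<le> d + b"
  shows "\<tau> L b \<le> \<tau> L d"
  using assms bid_util_L_dominated[of "\<tau> H"] mixed_nonneg[OF mixed_profileD]
  by (intro weakly_payoff_monotone_le[OF assms(1,4)]) auto

text \<open>Raising h's bid from B - 1 to B loses 1 against every lower bid of l and gains
  v_h - 2B on a tie at B.\<close>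

lemma wpm_H_rise_mass:
  assumes wpm: "weakly_payoff_monotone WB_alpha pbar (vl, vh) \<tau>"
    and B: "1 \<le> B" "B \<le> pbar" and rise: "\<tau> H (B - 1) < \<tau> H B"
  shows "(\<Sum>y<B. \<tau> L y) < \<tau> L B * (real vh - 2 * real B)"
proof -
  have "0 < bid_util WB_alpha pbar (vl, vh) H B (\<tau> L) - bid_util WB_alpha pbar (vl, vh) H (B - 1) (\<tau> L)"
    using weakly_payoff_monotoneD[OF wpm B(2) _ rise] B(2) by simp
  also have "\<dots> = (\<Sum>x\<in>{0..pbar}. (if x \<in> {..<B} then - \<tau> L x else 0)
                    + (if x = B then \<tau> L B * (real vh - 2 * real B) else 0))"
    unfolding bid_util_diff auction_util_WB_H by (rule sum.cong) (use B in \<open>auto simp: of_nat_diff\<close>)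
  also have "\<dots> = - (\<Sum>y<B. \<tau> L y) + \<tau> L B * (real vh - 2 * real B)"
  proof -
    have "{..<B} \<subseteq> {0..pbar}" using B by auto
    then show ?thesis using B by (simp only: sum.distrib sum_if_mem_subset) (simp add: sum_negf)
  qed
  finally show ?thesis by simp
qed

lemma bid_util_H_lower_gain:
  fixes p :: "nat \<Rightarrow> real"
  assumes p: "\<And>x. 0 \<le> p x" and "e < s" "s \<le> e'" "e' \<le> pbar" "2 * e' \<le> vh"
    and floor: "\<And>x. s \<le> x \<Longrightarrow> x \<le> e' \<Longrightarrow> m \<le> p x"
  shows "bid_util WB_alpha pbar (vl, vh) H e p - bid_util WB_alpha pbar (vl, vh) H e' p
    \<le> (real e' - real e) * (\<Sum>x=0..e. p x) + m * (\<Sum>x=s..e'. real x + (real e' - real vh))"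
proof -
  have "bid_util WB_alpha pbar (vl, vh) H e p - bid_util WB_alpha pbar (vl, vh) H e' p
      = (\<Sum>x\<in>{0..pbar}. p x * (if x \<le> e then real e' - real e
                                 else if x \<le> e' then real x + (real e' - real vh) else 0))"
    unfolding bid_util_diff auction_util_WB_H by (rule sum.cong) (use assms in auto)
  also have "\<dots> \<le> (\<Sum>x\<in>{0..pbar}. (if x \<in> {0..e} then (real e' - real e) * p x else 0)
                     + (if x \<in> {s..e'} then m * (real x + (real e' - real vh)) else 0))"
  proof (rule sum_mono)
    fix x
    have loss: "real x + (real e' - real vh) \<le> 0" if "x \<le> e'" using that assms by linarith
    then have "p x * (real x + (real e' - real vh)) \<le> 0" if "x \<le> e'"
      using that p[of x] by (simp add: mult_nonneg_nonpos)
    moreover have "p x * (real x + (real e' - real vh)) \<le> m * (real x + (real e' - real vh))"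
      if "s \<le> x" "x \<le> e'"
      using that floor loss by (simp add: mult_right_mono_neg)
    moreover note \<open>e < s\<close>
    ultimately show "p x * (if x \<le> e then real e' - real e
                       else if x \<le> e' then real x + (real e' - real vh) else 0)
        \<le> (if x \<in> {0..e} then (real e' - real e) * p x else 0)
            + (if x \<in> {s..e'} then m * (real x + (real e' - real vh)) else 0)"
      by auto
  qed
  also have "\<dots> = (real e' - real e) * (\<Sum>x=0..e. p x) + m * (\<Sum>x=s..e'. real x + (real e' - real vh))"
  proof -
    have "{0..e} \<subseteq> {0..pbar}" "{s..e'} \<subseteq> {0..pbar}" using assms by auto
    then show ?thesis by (subst sum.distrib) (simp only: sum_if_mem_subset sum_distrib_left)
  qed
  finally show ?thesis .
qed

lemma sum_reflect_nonpos:
  fixes w :: "nat \<Rightarrow> real"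
  assumes "a \<le> c" and mono: "\<And>x. a \<le> x \<Longrightarrow> x < c \<Longrightarrow> w x \<le> w (2 * c - x)"
  shows "(\<Sum>x=a..2 * c - a. w x * (real c - real x)) \<le> 0"
proof -
  let ?f = "\<lambda>x. w x * (real c - real x)"
  have reflect: "sum ?f {a..2 * c - a} = (\<Sum>x=a..2 * c - a. ?f (2 * c - x))"
    by (rule sum.reindex_bij_witness[of _ "\<lambda>x. 2 * c - x" "\<lambda>x. 2 * c - x"]) (use assms(1) in auto)
  have "(\<Sum>x=a..2 * c - a. ?f x + ?f (2 * c - x)) \<le> 0"
  proof (rule sum_nonpos)
    fix x assume x: "x \<in> {a..2 * c - a}"
    then have pair: "?f x + ?f (2 * c - x) = (w x - w (2 * c - x)) * (real c - real x)"
      by (auto simp: of_nat_diff algebra_simps)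
    consider "x < c" | "x = c" | "c < x" by linarith
    then show "?f x + ?f (2 * c - x) \<le> 0"
    proof cases
      case 1
      then show ?thesis unfolding pair using mono x by (simp add: mult_nonpos_nonneg)
    next
      case 2
      then show ?thesis by simp
    next
      case 3
      then have "w (2 * c - x) \<le> w x" using mono[of "2 * c - x"] x by auto
      then show ?thesis unfolding pair using 3 by (simp add: mult_nonneg_nonpos)
    qed
  qed
  then show ?thesis using reflect by (simp add: sum.distrib)
qed

text \<open>With s = v_l - B, winning at B pays l exactly s, so bidding B rather than d changes
  l's utility by s - x against h's bids x \<in> [d, B), up to nonpositive terms; the terms on
  [d, 2s - d] cancel in pairs x, 2s - x.\<close>

lemma bid_util_L_reflect:
  assumes q: "\<And>x. 0 \<le> q x" and ds: "d < s" and sB: "2 * s - d < B" "s + B = vl" "B \<le> pbar"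
    and reflect: "\<And>x. d \<le> x \<Longrightarrow> x < s \<Longrightarrow> q x \<le> q (2 * s - x)"
  shows "bid_util WB_alpha pbar (vl, vh) L B q \<le> bid_util WB_alpha pbar (vl, vh) L d q"
proof -
  have "bid_util WB_alpha pbar (vl, vh) L B q - bid_util WB_alpha pbar (vl, vh) L d q
      = (\<Sum>x\<in>{0..pbar}. q x * (if B \<le> x then 0 else if d \<le> x then real s - real x else real d - real B))"
    unfolding bid_util_diff auction_util_WB_L by (rule sum.cong) (use ds sB in auto)
  also have "\<dots> \<le> (\<Sum>x\<in>{0..pbar}. if x \<in> {d..2 * s - d} then q x * (real s - real x) else 0)"
  proof (rule sum_mono)
    fix x
    have "q x * (real s - real x) \<le> 0" if "s \<le> x" using that q[of x] by (simp add: mult_nonneg_nonpos)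
    moreover have "q x * (real d - real B) \<le> 0" using ds sB q[of x] by (simp add: mult_nonneg_nonpos)
    ultimately show "q x * (if B \<le> x then 0 else if d \<le> x then real s - real x else real d - real B)
        \<le> (if x \<in> {d..2 * s - d} then q x * (real s - real x) else 0)"
      using ds sB by auto
  qed
  also have "\<dots> = (\<Sum>x=d..2 * s - d. q x * (real s - real x))"
  proof -
    have "{d..2 * s - d} \<subseteq> {0..pbar}" using sB by auto
    then show ?thesis by (rule sum_if_mem_subset)
  qed
  also have "\<dots> \<le> 0" by (rule sum_reflect_nonpos) (use ds reflect in auto)
  finally show ?thesis by simp
qed

lemma exp_bid_le_centre:
  assumes m: "mixed pbar p" and top: "\<And>b. B < b \<Longrightarrow> p b = 0" and "B \<le> 2 * c"
    and antimono: "\<And>d b. d < b \<Longrightarrow> b \<le> pbar \<Longrightarrow> 2 * c \<le> d + b \<Longrightarrow> p b \<le> p d"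
  shows "exp_bid pbar p \<le> real c"
proof -
  have "real c - exp_bid pbar p = (\<Sum>x\<in>{0..pbar}. p x * (real c - real x))"
    using sum_mixed_const[OF m, of "real c"] by (simp add: exp_bid_def algebra_simps sum_subtractf)
  also have "\<dots> = (\<Sum>x\<in>{0..pbar + 2 * c}. p x * (real c - real x))"
    by (rule sum.mono_neutral_left) (auto simp: mixed_vanishes[OF m])
  also have "\<dots> = (\<Sum>x=0..2 * c - 0. p x * (real c - real x))"
    by (rule sum.mono_neutral_right) (use assms(3) in \<open>auto simp: top\<close>)
  also have "\<dots> = - (\<Sum>x=0..2 * c - 0. (- p x) * (real c - real x))"
    by (simp add: sum_negf)
  also have "\<dots> \<ge> 0"
  proof -
    have "- p x \<le> - p (2 * c - x)" if "x < c" for x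
    proof (cases "2 * c - x \<le> pbar")
      case True then show ?thesis using antimono[of x "2 * c - x"] that by simp
    next
      case False then show ?thesis using mixed_vanishes[OF m] mixed_nonneg[OF m, of x] by simp
    qed
    then show ?thesis using sum_reflect_nonpos[of 0 c "\<lambda>x. - p x"] by simp
  qed
  finally show ?thesis by simp
qed

lemma exp_bid_lt_top:
  assumes m: "mixed pbar p" and top: "\<And>b. B < b \<Longrightarrow> p b = 0"
    and "0 < B" "B \<le> pbar" "0 < p (B - 1)"
  shows "exp_bid pbar p < real B"
proof -
  have term_nonneg: "0 \<le> p x * (real B - real x)" for x
    using top[of x] mixed_nonneg[OF m, of x] by (cases "x \<le> B") simp_all
  have "0 < p (B - 1) * (real B - real (B - 1))"
    using assms by (simp add: of_nat_diff)
  also have "\<dots> \<le> (\<Sum>x\<in>{0..pbar}. p x * (real B - real x))"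
    by (rule member_le_sum) (use term_nonneg \<open>B \<le> pbar\<close> in auto)
  also have "\<dots> = real B - exp_bid pbar p"
    using sum_mixed_const[OF m, of "real B"] by (simp add: exp_bid_def algebra_simps sum_subtractf)
  finally show ?thesis by simp
qed

lemma bid_util_H_sure_win:
  assumes "mixed pbar p" and "\<And>y. B < y \<Longrightarrow> p y = 0"
  shows "bid_util WB_alpha pbar (vl, vh) H B p = real vh - real B"
proof -
  have "bid_util WB_alpha pbar (vl, vh) H B p = (\<Sum>y\<in>{0..pbar}. p y * (real vh - real B))"
    unfolding bid_util_def auction_util_WB_H by (rule sum.cong) (use assms(2) in \<open>auto simp: not_le\<close>)
  then show ?thesis by (simp add: sum_mixed_const[OF assms(1)])
qed

lemma nash_payoff_ge:
  assumes "nash a pbar v \<sigma>" "d \<le> pbar"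
  shows "bid_util a pbar v i d (\<sigma> (other i)) \<le> payoff a pbar v \<sigma> i"
  unfolding payoff_def
  by (rule sum_mixed_ge) (use assms in \<open>auto simp: nash_def mixed_profileD intro: nashD[OF assms(1)]\<close>)

lemma nash_H_not_above_L_top:
  assumes ne: "nash WB_alpha pbar (vl, vh) \<sigma>"
    and top: "\<And>y. B < y \<Longrightarrow> \<sigma> L y = 0" and "B \<le> pbar" "B < x"
  shows "\<sigma> H x = 0"
proof (rule ccontr)
  have mL: "mixed pbar (\<sigma> L)" and mH: "mixed pbar (\<sigma> H)"
    using ne by (simp_all add: nash_def mixed_profileD)
  assume "\<sigma> H x \<noteq> 0"
  then have pos: "0 < \<sigma> H x" and "x \<le> pbar"
    using mixed_nonneg[OF mH, of x] mixed_vanishes[OF mH, of x] by (simp, meson not_le)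
  have "bid_util WB_alpha pbar (vl, vh) H x (\<sigma> L) = (\<Sum>y\<in>{0..pbar}. \<sigma> L y * (real vh - real x))"
    unfolding bid_util_def auction_util_WB_H by (rule sum.cong) (use assms in \<open>auto simp: not_le\<close>)
  also have "\<dots> < bid_util WB_alpha pbar (vl, vh) H B (\<sigma> L)"
    using assms by (simp add: sum_mixed_const[OF mL] bid_util_H_sure_win[OF mL])
  finally show False using nashD[OF ne pos \<open>x \<le> pbar\<close> \<open>B \<le> pbar\<close>] by simp
qed

lemma nash_H_point_mass_above_centre:
  assumes ne: "nash WB_alpha pbar (2 * cl, vh) \<sigma>"
    and "cl < B" "B \<le> pbar" and top: "0 < \<sigma> L B" and below: "0 < \<sigma> L (B - 1)" and "x < B"
  shows "\<sigma> H x = 0"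
proof -
  have mH: "mixed pbar (\<sigma> H)" using ne by (simp add: nash_def mixed_profileD)
  define loss where
    "loss x = (if B \<le> x then 0 else if x = B - 1 then 2 * real cl - 2 * real B + 1 else (-1::real))" for x
  have loss_neg: "loss x < 0" if "x < B" for x
    using that \<open>cl < B\<close> by (auto simp: loss_def)
  have "bid_util WB_alpha pbar (2 * cl, vh) L B (\<sigma> H) - bid_util WB_alpha pbar (2 * cl, vh) L (B - 1) (\<sigma> H)
      = (\<Sum>x\<in>{0..pbar}. \<sigma> H x * loss x)"
    unfolding bid_util_diff auction_util_WB_L loss_def
    by (rule sum.cong) (use \<open>cl < B\<close> in \<open>auto simp: of_nat_diff\<close>)
  moreover have "bid_util WB_alpha pbar (2 * cl, vh) L B (\<sigma> H) = bid_util WB_alpha pbar (2 * cl, vh) L (B - 1) (\<sigma> H)"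
    using nashD[OF ne top \<open>B \<le> pbar\<close>, of "B - 1"] nashD[OF ne below _ \<open>B \<le> pbar\<close>] \<open>B \<le> pbar\<close>
    by (simp; linarith)
  ultimately have "(\<Sum>x\<in>{0..pbar}. - (\<sigma> H x * loss x)) = 0" by (simp add: sum_negf)
  moreover have "0 \<le> - (\<sigma> H x * loss x)" for x
    using loss_neg[of x] mixed_nonneg[OF mH, of x] by (cases "x < B") (auto simp: mult_nonneg_nonpos loss_def)
  ultimately have "\<sigma> H x * loss x = 0" using assms by (subst (asm) sum_nonneg_eq_0_iff) auto
  then show ?thesis using loss_neg[OF \<open>x < B\<close>] by simp
qed

lemma payoff_L_plus_payoff_H:
  assumes "mixed_profile pbar \<sigma>"
  shows "payoff WB_alpha pbar (vl, vh) \<sigma> L + payoff WB_alpha pbar (vl, vh) \<sigma> H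
    = real vh - (real vh - real vl) * (\<Sum>b\<in>{0..pbar}. \<Sum>x\<in>{0..pbar}. \<sigma> L b * \<sigma> H x * (if x < b then 1 else 0))"
proof -
  have mL: "mixed pbar (\<sigma> L)" and mH: "mixed pbar (\<sigma> H)"
    using assms by (simp_all add: mixed_profileD)
  have PL: "payoff WB_alpha pbar (vl, vh) \<sigma> L
      = (\<Sum>b\<in>{0..pbar}. \<Sum>x\<in>{0..pbar}. \<sigma> L b * \<sigma> H x * (if b \<le> x then real x else real vl - real b))"
    unfolding payoff_def bid_util_def auction_util_WB_L by (simp add: sum_distrib_left mult.assoc)
  have PH: "payoff WB_alpha pbar (vl, vh) \<sigma> H
      = (\<Sum>b\<in>{0..pbar}. \<Sum>x\<in>{0..pbar}. \<sigma> L b * \<sigma> H x * (if b \<le> x then real vh - real x else real b))"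
    unfolding payoff_def bid_util_def auction_util_WB_H
    by (subst sum.swap) (simp add: sum_distrib_left mult.assoc mult.left_commute)
  have "payoff WB_alpha pbar (vl, vh) \<sigma> L + payoff WB_alpha pbar (vl, vh) \<sigma> H
     = (\<Sum>b\<in>{0..pbar}. \<Sum>x\<in>{0..pbar}. \<sigma> L b * \<sigma> H x * real vh
          - (real vh - real vl) * (\<sigma> L b * \<sigma> H x * (if x < b then 1 else 0)))"
    unfolding PL PH sum.distrib[symmetric] by (intro sum.cong) (auto simp: algebra_simps)
  also have "\<dots> = (\<Sum>b\<in>{0..pbar}. \<Sum>x\<in>{0..pbar}. \<sigma> L b * \<sigma> H x * real vh)
      - (real vh - real vl) * (\<Sum>b\<in>{0..pbar}. \<Sum>x\<in>{0..pbar}. \<sigma> L b * \<sigma> H x * (if x < b then 1 else 0))"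
    by (simp add: sum_subtractf sum_distrib_left)
  also have "(\<Sum>b\<in>{0..pbar}. \<Sum>x\<in>{0..pbar}. \<sigma> L b * \<sigma> H x * real vh) = real vh"
    by (simp add: sum_distrib_left[symmetric] sum_distrib_right[symmetric] mult.assoc mixed_sum[OF mL] mixed_sum[OF mH])
  finally show ?thesis .
qed

lemma nash_L_top_ge_centre:
  assumes ne: "nash WB_alpha pbar (2 * cl, 2 * ch) \<sigma>" and "cl < ch" "cl \<le> pbar" "B \<le> pbar"
    and top: "\<And>y. B < y \<Longrightarrow> \<sigma> L y = 0" and pos: "0 < \<sigma> L B"
  shows "cl \<le> B" and "B = cl \<Longrightarrow> x < B \<Longrightarrow> \<sigma> H x = 0"
proof -
  have mp: "mixed_profile pbar \<sigma>" using ne by (simp add: nash_def)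
  note mL = mixed_profileD[OF mp, of L] and mH = mixed_profileD[OF mp, of H]
  define W where "W = (\<Sum>b\<in>{0..pbar}. \<Sum>x\<in>{0..pbar}. \<sigma> L b * \<sigma> H x * (if x < b then 1 else 0))"
  have W_ge: "\<sigma> L B * \<sigma> H x \<le> W" if "x < B" for x
  proof -
    have "\<sigma> L B * \<sigma> H x \<le> (\<Sum>y\<in>{0..pbar}. \<sigma> L B * \<sigma> H y * (if y < B then 1 else 0))"
      using member_le_sum[of x "{0..pbar}" "\<lambda>y. \<sigma> L B * \<sigma> H y * (if y < B then 1 else 0)"]
        that \<open>B \<le> pbar\<close> mixed_nonneg[OF mL] mixed_nonneg[OF mH] by auto
    also have "\<dots> \<le> W" unfolding W_def
      by (rule member_le_sum)
        (use \<open>B \<le> pbar\<close> mixed_nonneg[OF mL] mixed_nonneg[OF mH] in \<open>auto intro!: sum_nonneg\<close>)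
    finally show ?thesis .
  qed
  have W_nonneg: "0 \<le> W"
    unfolding W_def by (auto intro!: sum_nonneg simp: mixed_nonneg[OF mL] mixed_nonneg[OF mH])
  have "real cl \<le> bid_util WB_alpha pbar (2 * cl, 2 * ch) L cl (\<sigma> H)"
    unfolding bid_util_def auction_util_WB_L by (rule sum_mixed_ge[OF mH]) auto
  also have "\<dots> \<le> payoff WB_alpha pbar (2 * cl, 2 * ch) \<sigma> L"
    using nash_payoff_ge[OF ne \<open>cl \<le> pbar\<close>, of L] by simp
  finally have "real cl + (2 * real ch - real B) \<le>
      payoff WB_alpha pbar (2 * cl, 2 * ch) \<sigma> L + payoff WB_alpha pbar (2 * cl, 2 * ch) \<sigma> H"
    using nash_payoff_ge[OF ne \<open>B \<le> pbar\<close>, of H] bid_util_H_sure_win[OF mL top] by simp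
  moreover have "payoff WB_alpha pbar (2 * cl, 2 * ch) \<sigma> L + payoff WB_alpha pbar (2 * cl, 2 * ch) \<sigma> H
      = 2 * real ch - 2 * (real ch - real cl) * W"
    using payoff_L_plus_payoff_H[OF mp, of "2 * cl" "2 * ch"] by (simp add: W_def)
  ultimately have surplus: "2 * (real ch - real cl) * W \<le> real B - real cl"
    by linarith
  moreover have "0 \<le> 2 * (real ch - real cl) * W" using W_nonneg \<open>cl < ch\<close> by simp
  ultimately show "cl \<le> B" by simp
  assume "B = cl" "x < B"
  then have "W \<le> 0" using surplus \<open>cl < ch\<close> by (simp add: mult_le_0_iff)
  then have "\<sigma> L B * \<sigma> H x \<le> 0" using W_ge[OF \<open>x < B\<close>] by simp
  then show "\<sigma> H x = 0"
    using pos mixed_nonneg[OF mH, of x] by (simp add: mult_le_0_iff)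
qed

lemma mixed_support_max:
  assumes "mixed pbar p"
  obtains B where "B \<le> pbar" "0 < p B" "\<And>b. B < b \<Longrightarrow> p b = 0"
proof -
  define S where "S = {b\<in>{0..pbar}. 0 < p b}"
  have "S \<noteq> {}"
  proof
    assume "S = {}"
    then have "\<forall>b\<in>{0..pbar}. \<not> 0 < p b" by (auto simp: S_def)
    then have "\<forall>b\<in>{0..pbar}. p b = 0" using mixed_nonneg[OF assms] by (force simp: not_less intro: antisym)
    then show False using mixed_sum[OF assms] by simp
  qed
  moreover have "finite S" by (simp add: S_def)
  ultimately have max: "Max S \<in> S" and "\<And>b. b \<in> S \<Longrightarrow> b \<le> Max S" by simp_all
  moreover have "b \<in> S" if "0 < p b" for b
    using that mixed_vanishes[OF assms, of b] by (force simp: S_def)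
  ultimately have not_pos: "\<not> 0 < p b" if "Max S < b" for b
    using that leD by blast
  have "p b = 0" if "Max S < b" for b
    using not_pos[OF that] mixed_nonneg[OF assms, of b] by simp
  moreover have "Max S \<le> pbar" "0 < p (Max S)" using max by (simp_all add: S_def)
  ultimately show thesis using that by blast
qed

lemma nash_H_bids_L_top:
  assumes ne: "nash WB_alpha pbar (2 * cl, 2 * ch) \<sigma>" and "cl < ch" "ch \<le> pbar"
    and antimono: "\<And>d b. d < b \<Longrightarrow> b \<le> pbar \<Longrightarrow> 2 * cl \<le> d + b \<Longrightarrow> \<sigma> L b \<le> \<sigma> L d"
  obtains B where "B \<le> pbar" "cl \<le> B" "0 < \<sigma> L B" "\<And>b. B < b \<Longrightarrow> \<sigma> L b = 0"
    "\<sigma> H B = 1" "\<And>e. e \<noteq> B \<Longrightarrow> \<sigma> H e = 0" "cl < B \<Longrightarrow> 0 < \<sigma> L (B - 1)"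
proof -
  have mp: "mixed_profile pbar \<sigma>" using ne by (simp add: nash_def)
  obtain B where B: "B \<le> pbar" "0 < \<sigma> L B" and top: "\<And>b. B < b \<Longrightarrow> \<sigma> L b = 0"
    using mixed_support_max[OF mixed_profileD[OF mp]] by blast
  have cl_le: "cl \<le> B"
    using nash_L_top_ge_centre(1)[OF ne \<open>cl < ch\<close> _ B(1) top B(2)] assms by simp
  have below: "0 < \<sigma> L (B - 1)" if "cl < B"
    using antimono[of "B - 1" B] that B by fastforce
  have H_zero: "\<sigma> H e = 0" if "e \<noteq> B" for e
  proof (cases "e < B")
    case True
    show ?thesis
    proof (cases "cl < B")
      case True
      show ?thesis by (rule nash_H_point_mass_above_centre[OF ne True B below[OF True] \<open>e < B\<close>])
    next
      case False
      show ?thesis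
        using nash_L_top_ge_centre(2)[OF ne \<open>cl < ch\<close> _ B(1) top B(2)] False cl_le assms \<open>e < B\<close> by simp
    qed
  next
    case False
    then show ?thesis using nash_H_not_above_L_top[OF ne top B(1)] that by simp
  qed
  have "\<sigma> H B = 1"
    using mixed_sum[OF mixed_profileD[OF mp, of H]] B(1) H_zero by (simp add: sum.remove[of _ B])
  then show thesis using that B top cl_le H_zero below by blast
qed

lemma point_mass_values:
  assumes mL: "mixed pbar (\<sigma> L)" and "B \<le> pbar" and top: "\<And>b. B < b \<Longrightarrow> \<sigma> L b = 0"
    and "\<sigma> H B = 1" and "\<And>e. e \<noteq> B \<Longrightarrow> \<sigma> H e = 0"
  shows "exp_bid pbar (\<sigma> H) = real B"
    and "payoff WB_alpha pbar (vl, vh) \<sigma> L = real B"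
    and "payoff WB_alpha pbar (vl, vh) \<sigma> H = real vh - real B"
proof -
  have H_avg: "(\<Sum>x\<in>{0..pbar}. \<sigma> H x * f x) = f B" for f :: "nat \<Rightarrow> real"
    using assms by (subst sum.mono_neutral_cong_right[of "{0..pbar}" "{B}"]) auto
  show "exp_bid pbar (\<sigma> H) = real B" unfolding exp_bid_def by (rule H_avg)
  have "payoff WB_alpha pbar (vl, vh) \<sigma> L = (\<Sum>b\<in>{0..pbar}. \<sigma> L b * real B)"
    unfolding payoff_def bid_util_def other.simps auction_util_WB_L H_avg by (rule sum.cong) (auto simp: top)
  then show "payoff WB_alpha pbar (vl, vh) \<sigma> L = real B" by (simp add: sum_mixed_const[OF mL])
  show "payoff WB_alpha pbar (vl, vh) \<sigma> H = real vh - real B"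
    unfolding payoff_def other.simps H_avg using bid_util_H_sure_win[OF mL top] by simp
qed

lemma sum_of_nat_interval:
  "(\<Sum>x=s..s + j. real x) = (real j + 1) * real s + real j * (real j + 1) / 2"
  by (induction j) (auto simp: algebra_simps)

lemma reflection_gain_nonpos:
  fixes j k D :: real
  assumes "1 \<le> j" "j \<le> 2 * k - 1" "D \<le> 3 * k - 3"
  shows "2 * j * (2 * D - 4 * k) + (j + 1) * (j - 2 * k - 2 * D) + j * (j + 1) / 2 \<le> 0"
proof -
  define P Q R where "P = (3 * k - 3 - D) * (j - 1)" and "Q = j * (2 * k - 1 - j)" and "R = j * k"
  have "0 \<le> P" "0 \<le> Q" "0 \<le> R" using assms by (simp_all add: P_def Q_def R_def)
  moreover have "2 * j * (2 * D - 4 * k) + (j + 1) * (j - 2 * k - 2 * D) + j * (j + 1) / 2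
      = - R - 6 * j - 8 * k + 6 - 2 * P - 3 / 2 * Q"
    by (simp add: P_def Q_def R_def algebra_simps)
  ultimately show ?thesis using assms by linarith
qed

locale wpm_rising_top =
  fixes cl ch pbar B :: nat and \<tau> :: profile
  assumes mixed: "mixed_profile pbar \<tau>"
    and monotone: "weakly_payoff_monotone WB_alpha pbar (2 * cl, 2 * ch) \<tau>"
    and centre_less: "cl < B" and B_le: "B \<le> pbar"
    and H_rise: "\<tau> H (B - 1) < \<tau> H B" and L_top: "0 < \<tau> L B"
begin

lemma nonneg: "0 \<le> \<tau> i x"
  using mixed_nonneg[OF mixed_profileD[OF mixed]] .

lemma mass_below_top: "(\<Sum>y<B. \<tau> L y) < \<tau> L B * (2 * real ch - 2 * real B)"
  using wpm_H_rise_mass[OF monotone _ B_le H_rise] centre_less by simp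

lemma top_less_ch: "B < ch"
proof -
  have "0 < \<tau> L B * (2 * real ch - 2 * real B)"
    using mass_below_top sum_nonneg[of "{..<B}" "\<tau> L"] nonneg by fastforce
  then show ?thesis using L_top by (simp add: zero_less_mult_iff)
qed

lemma L_top_le: "2 * cl - B \<le> d \<Longrightarrow> d \<le> B \<Longrightarrow> \<tau> L B \<le> \<tau> L d"
  using wpm_L_antimono[OF monotone mixed _ B_le, of d] by (cases "d = B") auto

lemma mass_below_mirror:
  assumes "e < 2 * cl - B"
  shows "(\<Sum>x=0..e. \<tau> L x) < \<tau> L B * (2 * real ch - 2 * real B - 2 * (real B - real cl))"
proof -
  have "card {2 * cl - B..<B} = 2 * (B - cl)" using assms by simp
  then have "real (2 * (B - cl)) * \<tau> L B = (\<Sum>x=2 * cl - B..<B. \<tau> L B)"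
    by simp
  also have "\<dots> \<le> (\<Sum>x=2 * cl - B..<B. \<tau> L x)"
    by (rule sum_mono) (simp add: L_top_le)
  finally have "(\<Sum>x=0..e. \<tau> L x) + real (2 * (B - cl)) * \<tau> L B
      \<le> (\<Sum>x=0..e. \<tau> L x) + (\<Sum>x=2 * cl - B..<B. \<tau> L x)"
    by simp
  also have "\<dots> = (\<Sum>x\<in>{0..e} \<union> {2 * cl - B..<B}. \<tau> L x)"
    by (rule sum.union_disjoint[symmetric]) (use assms in auto)
  also have "\<dots> \<le> (\<Sum>y<B. \<tau> L y)"
    by (rule sum_mono2) (use assms centre_less nonneg in auto)
  finally show ?thesis using mass_below_top centre_less by (simp add: of_nat_diff algebra_simps)
qed

text \<open>If h preferred s - j to s + j (s = v_l - B), lowering its bid from s + j would gain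
  on l's bids up to s - j, whose mass is bounded by \<open>mass_below_mirror\<close>, but lose on
  l's bids in [s, s + j], each of weight at least \<open>\<tau>_l(B)\<close>; the balance is computed in
  \<open>reflection_gain_nonpos\<close>.\<close>

lemma H_reflect:
  assumes spread: "real ch - real cl \<le> 3 * (real B - real cl) - 3"
    and j: "1 \<le> j" "j \<le> 2 * cl - B" "2 * cl - B + j < B"
  shows "\<tau> H (2 * cl - B - j) \<le> \<tau> H (2 * cl - B + j)"
proof (rule ccontr)
  define s where "s = 2 * cl - B"
  define m where "m = \<tau> L B"
  define W where "W = (\<Sum>x=s..s + j. real x + (real (s + j) - real (2 * ch)))"
  define X where "X = 2 * real ch - 2 * real B - 2 * (real B - real cl)"
  define F where "F = (\<Sum>x=0..s - j. \<tau> L x)"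
  assume "\<not> ?thesis"
  then have "\<tau> H (s + j) < \<tau> H (s - j)" by (simp add: s_def)
  moreover have "s - j < s" "s + j < B" "B < ch" using j top_less_ch by (simp_all add: s_def)
  ultimately have "0 < bid_util WB_alpha pbar (2 * cl, 2 * ch) H (s - j) (\<tau> L)
                     - bid_util WB_alpha pbar (2 * cl, 2 * ch) H (s + j) (\<tau> L)"
    using weakly_payoff_monotoneD[OF monotone, of "s - j" "s + j" H] B_le by simp
  also have "\<dots> \<le> (real (s + j) - real (s - j)) * F + m * W"
    unfolding W_def m_def F_def
    by (rule bid_util_H_lower_gain) (use \<open>s - j < s\<close> \<open>s + j < B\<close> \<open>B < ch\<close> B_le nonneg in
        \<open>auto intro: L_top_le simp: s_def\<close>)
  also have "\<dots> \<le> m * (2 * real j * X + W)"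
  proof -
    have "F \<le> m * X"
      using mass_below_mirror[of "s - j"] \<open>s - j < s\<close> by (simp add: s_def m_def F_def X_def)
    then have "2 * real j * F \<le> 2 * real j * (m * X)" by (intro mult_left_mono) auto
    moreover have "real (s + j) - real (s - j) = 2 * real j" using j by (simp add: s_def of_nat_diff)
    moreover have "m * (2 * real j * X + W) = 2 * real j * (m * X) + m * W" by (simp add: algebra_simps)
    ultimately show ?thesis by simp
  qed
  finally have "0 < 2 * real j * X + W"
    using L_top by (simp add: m_def zero_less_mult_iff)
  moreover have "W = (real j + 1) * real s + real j * (real j + 1) / 2 + (real j + 1) * (real (s + j) - 2 * real ch)"
    unfolding W_def sum.distrib sum_of_nat_interval by simp
  moreover have "real s = 2 * real cl - real B" using j by (simp add: s_def of_nat_diff)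
  moreover have "2 * real j * (2 * (real ch - real cl) - 4 * (real B - real cl))
      + (real j + 1) * (real j - 2 * (real B - real cl) - 2 * (real ch - real cl))
      + real j * (real j + 1) / 2 \<le> 0"
    by (rule reflection_gain_nonpos) (use j spread in simp_all)
  ultimately show False unfolding X_def by (simp add: algebra_simps)
qed

lemma L_top_le_mirror:
  assumes spread: "real ch - real cl \<le> 3 * (real B - real cl) - 3"
    and d: "d < 2 * cl - B" "2 * cl - B + 1 \<le> d + 2 * (B - cl)"
  shows "\<tau> L B \<le> \<tau> L d"
proof (rule weakly_payoff_monotone_le[OF monotone B_le])
  show "d \<le> pbar" using d B_le by simp
  have "bid_util WB_alpha pbar (2 * cl, 2 * ch) L B (\<tau> H) \<le> bid_util WB_alpha pbar (2 * cl, 2 * ch) L d (\<tau> H)"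
  proof (rule bid_util_L_reflect[where s = "2 * cl - B"])
    fix x assume x: "d \<le> x" "x < 2 * cl - B"
    have "\<tau> H (2 * cl - B - (2 * cl - B - x)) \<le> \<tau> H (2 * cl - B + (2 * cl - B - x))"
      by (rule H_reflect[OF spread]) (use x d in auto)
    moreover have "2 * cl - B - (2 * cl - B - x) = x" "2 * cl - B + (2 * cl - B - x) = 2 * (2 * cl - B) - x"
      using x by auto
    ultimately show "\<tau> H x \<le> \<tau> H (2 * (2 * cl - B) - x)" by simp
  qed (use d centre_less B_le nonneg in auto)
  then show "bid_util WB_alpha pbar (2 * cl, 2 * ch) L B (\<tau> (other L))
      \<le> bid_util WB_alpha pbar (2 * cl, 2 * ch) L d (\<tau> (other L))"
    by simp
qed

lemma top_bid_bound:
  "real B < real cl + max (2 * real ch / 3 - real cl) ((real ch - real cl) / 3) + 1"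
proof (rule ccontr)
  assume "\<not> ?thesis"
  then have bound: "real cl + max (2 * real ch / 3 - real cl) ((real ch - real cl) / 3) + 1 \<le> real B"
    by simp
  have large: "2 * real ch / 3 + 1 \<le> real B"
    using bound by (simp add: max_def field_simps split: if_splits)
  have spread: "real ch - real cl \<le> 3 * (real B - real cl) - 3"
    using bound by (simp add: max_def field_simps split: if_splits)
  \<comment> \<open>Every bid from lo to B carries at least \<open>\<tau>_l(B)\<close>; there are too many of them.\<close>
  define lo where "lo = (2 * cl - B + 1) - 2 * (B - cl)"
  have "\<tau> L B \<le> \<tau> L d" if "lo \<le> d" "d < B" for d
  proof (cases "d < 2 * cl - B")
    case True
    then show ?thesis using L_top_le_mirror[OF spread True] that by (simp add: lo_def)
  next
    case False
    then show ?thesis using L_top_le that by simp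
  qed
  then have "real (B - lo) * \<tau> L B \<le> (\<Sum>x=lo..<B. \<tau> L x)"
    using sum_mono[of "{lo..<B}" "\<lambda>_. \<tau> L B" "\<tau> L"] by simp
  also have "\<dots> \<le> (\<Sum>y<B. \<tau> L y)"
    by (rule sum_mono2) (auto simp: nonneg)
  finally have "\<tau> L B * real (B - lo) < \<tau> L B * (2 * real ch - 2 * real B)"
    using mass_below_top by (simp add: mult.commute)
  then have "real (B - lo) < 2 * real ch - 2 * real B"
    using L_top by simp
  then show False
    using large spread centre_less by (cases "lo = 0") (auto simp: lo_def of_nat_diff)
qed

end

lemma exp_bid_tendsto:
  "(\<And>b. (\<lambda>n. s n b) \<longlonglongrightarrow> s0 b) \<Longrightarrow> (\<lambda>n. exp_bid pbar (s n)) \<longlonglongrightarrow> exp_bid pbar s0"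
  unfolding exp_bid_def by (intro tendsto_intros)

lemma payoff_tendsto:
  "(\<And>i b. (\<lambda>n. \<sigma>s n i b) \<longlonglongrightarrow> \<sigma> i b)
    \<Longrightarrow> (\<lambda>n. payoff a pbar v (\<sigma>s n) i) \<longlonglongrightarrow> payoff a pbar v \<sigma> i"
  unfolding payoff_def bid_util_def by (intro tendsto_intros)

lemma eventually_less_of_tendsto:
  fixes f g :: "'a \<Rightarrow> real"
  assumes "(f \<longlongrightarrow> a) F" "(g \<longlongrightarrow> b) F" "a < b"
  shows "\<forall>\<^sub>F x in F. f x < g x"
  using order_tendstoD(1)[OF tendsto_diff[OF assms(2,1)], of 0] assms(3) by simp

lemma eventually_less_if_of_tendsto:
  fixes f g :: "'a \<Rightarrow> real"
  assumes "(f \<longlongrightarrow> a) F" "(g \<longlongrightarrow> b) F" "P \<longrightarrow> a < b"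
  shows "\<forall>\<^sub>F x in F. P \<longrightarrow> f x < g x"
  using eventually_less_of_tendsto[OF assms(1,2)] assms(3) by (cases P) simp_all

lemma limit_L_antimono:
  assumes "\<And>n. mixed_profile pbar (\<sigma>s n)" "\<And>n. weakly_payoff_monotone WB_alpha pbar (vl, vh) (\<sigma>s n)"
    and lim: "\<And>i b. (\<lambda>n. \<sigma>s n i b) \<longlonglongrightarrow> \<sigma> i b" and "d < b" "b \<le> pbar" "vl \<le> d + b"
  shows "\<sigma> L b \<le> \<sigma> L d"
  by (rule LIMSEQ_le[OF lim lim]) (use assms wpm_L_antimono in blast)

lemma limit_top_bid_bound:
  assumes "\<And>n. mixed_profile pbar (\<sigma>s n)"
    and "\<And>n. weakly_payoff_monotone WB_alpha pbar (2 * cl, 2 * ch) (\<sigma>s n)"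
    and lim: "\<And>i b. (\<lambda>n. \<sigma>s n i b) \<longlonglongrightarrow> \<sigma> i b"
    and "cl < B" "B \<le> pbar" "0 < \<sigma> L B" "\<sigma> H B = 1" "\<sigma> H (B - 1) = 0"
  shows "real B < real cl + max (2 * real ch / 3 - real cl) ((real ch - real cl) / 3) + 1"
proof -
  have "\<forall>\<^sub>F n in sequentially. \<sigma>s n H (B - 1) < \<sigma>s n H B"
    by (rule eventually_less_of_tendsto[OF lim lim]) (use assms in simp)
  moreover have "\<forall>\<^sub>F n in sequentially. 0 < \<sigma>s n L B"
    by (rule eventually_less_of_tendsto[OF tendsto_const lim]) (use assms in simp)
  ultimately have "\<forall>\<^sub>F n in sequentially. \<sigma>s n H (B - 1) < \<sigma>s n H B \<and> 0 < \<sigma>s n L B"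
    by (rule eventually_conj)
  then obtain n where "\<sigma>s n H (B - 1) < \<sigma>s n H B" "0 < \<sigma>s n L B"
    unfolding eventually_sequentially by blast
  then interpret wpm_rising_top cl ch pbar B "\<sigma>s n"
    using assms by unfold_locales auto
  show ?thesis by (rule top_bid_bound)
qed

lemma nash_limit_top_bid:
  assumes "cl < ch" "ch \<le> pbar" and ne: "nash WB_alpha pbar (2 * cl, 2 * ch) \<sigma>"
    and mps: "\<And>n. mixed_profile pbar (\<sigma>s n)"
    and wpms: "\<And>n. weakly_payoff_monotone WB_alpha pbar (2 * cl, 2 * ch) (\<sigma>s n)"
    and lim: "\<And>i b. (\<lambda>n. \<sigma>s n i b) \<longlonglongrightarrow> \<sigma> i b"
  obtains B where "B \<le> pbar" "cl \<le> B" "\<And>b. B < b \<Longrightarrow> \<sigma> L b = 0"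
    "\<sigma> H B = 1" "\<And>e. e \<noteq> B \<Longrightarrow> \<sigma> H e = 0" "cl < B \<Longrightarrow> 0 < \<sigma> L (B - 1)"
    "real B < real cl + max (2 * real ch / 3 - real cl) ((real ch - real cl) / 3) + 1"
proof -
  obtain B where B: "B \<le> pbar" "cl \<le> B" "0 < \<sigma> L B" "\<And>b. B < b \<Longrightarrow> \<sigma> L b = 0"
    "\<sigma> H B = 1" "\<And>e. e \<noteq> B \<Longrightarrow> \<sigma> H e = 0" "cl < B \<Longrightarrow> 0 < \<sigma> L (B - 1)"
    using nash_H_bids_L_top[OF ne assms(1,2) limit_L_antimono[OF mps wpms lim]] by blast
  have "real B < real cl + max (2 * real ch / 3 - real cl) ((real ch - real cl) / 3) + 1"
  proof (cases "cl < B")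
    case True
    then show ?thesis using limit_top_bid_bound[OF mps wpms lim True] B by simp
  next
    case False
    then show ?thesis using B(2) \<open>cl < ch\<close> by (simp add: max_def field_simps)
  qed
  with B show thesis using that by blast
qed

lemma nash_limit_bounds:
  fixes vl vh pbar :: nat and \<sigma> :: profile and \<sigma>s :: "nat \<Rightarrow> profile"
  assumes "even vl" "even vh" "vl < vh" "vh \<le> 2 * pbar"
    and ne: "nash WB_alpha pbar (vl, vh) \<sigma>"
    and mps: "\<And>n. mixed_profile pbar (\<sigma>s n)"
    and wpms: "\<And>n. weakly_payoff_monotone WB_alpha pbar (vl, vh) (\<sigma>s n)"
    and lim: "\<And>i b. (\<lambda>n. \<sigma>s n i b) \<longlonglongrightarrow> \<sigma> i b"
  defines "t \<equiv> max (2 * (real vh / 2) / 3 - real vl / 2) ((real vh / 2 - real vl / 2) / 3) + 1"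
  shows "real vh / 3 \<le> real vl \<longrightarrow> exp_bid pbar (\<sigma> L) < real vl / 2 + 1"
    and "real vl / 2 - 1 < exp_bid pbar (\<sigma> H)"
    and "exp_bid pbar (\<sigma> H) < real vl / 2 + t"
    and "payoff WB_alpha pbar (vl, vh) \<sigma> L < real vl / 2 + t"
    and "real vh / 2 + ((real vh / 2 - real vl / 2) - t) < payoff WB_alpha pbar (vl, vh) \<sigma> H"
    and "real vl / 2 < payoff WB_alpha pbar (vl, vh) \<sigma> L \<longrightarrow> exp_bid pbar (\<sigma> L) < exp_bid pbar (\<sigma> H)"
proof -
  obtain cl ch where vl: "vl = 2 * cl" and vh: "vh = 2 * ch"
    using assms(1,2) by (auto elim!: evenE)
  have "cl < ch" "ch \<le> pbar" using assms(3,4) vl vh by simp_all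
  have mL: "mixed pbar (\<sigma> L)" using ne by (simp add: nash_def mixed_profileD)
  obtain B where B: "B \<le> pbar" "cl \<le> B" "\<And>b. B < b \<Longrightarrow> \<sigma> L b = 0"
    "\<sigma> H B = 1" "\<And>e. e \<noteq> B \<Longrightarrow> \<sigma> H e = 0" "cl < B \<Longrightarrow> 0 < \<sigma> L (B - 1)"
    and "real B < real cl + max (2 * real ch / 3 - real cl) ((real ch - real cl) / 3) + 1"
    by (rule nash_limit_top_bid[OF \<open>cl < ch\<close> \<open>ch \<le> pbar\<close>, of \<sigma> \<sigma>s])
      (use ne mps wpms lim vl vh in simp_all)
  then have bound: "real B < real vl / 2 + t" unfolding t_def vl vh by simp
  note limit_values = point_mass_values[OF mL B(1,3,4,5)]
  show "real vh / 3 \<le> real vl \<longrightarrow> exp_bid pbar (\<sigma> L) < real vl / 2 + 1"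
  proof
    assume "real vh / 3 \<le> real vl"
    have "real B < real (2 * cl + 1)"
      using bound \<open>real vh / 3 \<le> real vl\<close> unfolding t_def vl vh by (simp add: max_def field_simps split: if_splits)
    then have le: "B \<le> 2 * cl" by linarith
    have anti: "\<sigma> L b \<le> \<sigma> L d" if "d < b" "b \<le> pbar" "2 * cl \<le> d + b" for d b
      using limit_L_antimono[OF mps wpms lim that(1,2)] that(3) vl by simp
    have "exp_bid pbar (\<sigma> L) \<le> real cl"
      using exp_bid_le_centre[OF mL B(3) le anti] .
    then show "exp_bid pbar (\<sigma> L) < real vl / 2 + 1" using vl by simp
  qed
  show "real vl / 2 - 1 < exp_bid pbar (\<sigma> H)" "exp_bid pbar (\<sigma> H) < real vl / 2 + t"
    "payoff WB_alpha pbar (vl, vh) \<sigma> L < real vl / 2 + t"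
    "real vh / 2 + ((real vh / 2 - real vl / 2) - t) < payoff WB_alpha pbar (vl, vh) \<sigma> H"
    using limit_values bound B(2) vl by simp_all
  show "real vl / 2 < payoff WB_alpha pbar (vl, vh) \<sigma> L \<longrightarrow> exp_bid pbar (\<sigma> L) < exp_bid pbar (\<sigma> H)"
    using exp_bid_lt_top[OF mL B(3) _ B(1) B(6)] limit_values vl by simp
qed

theorem theorem1:
  fixes vl vh vbar pbar :: nat and \<sigma> :: profile and \<sigma>s :: "nat \<Rightarrow> profile"
  assumes "even vl" and "even vh" and "vl < vh" and "vh \<le> vbar" and "vbar \<le> 2 * pbar"
    and "nash WB_alpha pbar (vl, vh) \<sigma>"
    and "\<And>n. mixed_profile pbar (\<sigma>s n)"
    and "\<And>n. weakly_payoff_monotone WB_alpha pbar (vl, vh) (\<sigma>s n)"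
    and "\<And>i b. (\<lambda>n. \<sigma>s n i b) \<longlonglongrightarrow> \<sigma> i b"
  shows "\<exists>\<Lambda>. \<forall>n\<ge>\<Lambda>.
    (let cl = real vl / 2; ch = real vh / 2; ES = ch - cl;
         t = max (2 * ch / 3 - cl) (ES / 3) + 1
     in (real vl \<ge> real vh / 3 \<longrightarrow> exp_bid pbar (\<sigma>s n L) < cl + 1)
      \<and> (cl - 1 < exp_bid pbar (\<sigma>s n H) \<and> exp_bid pbar (\<sigma>s n H) < cl + t)
      \<and> (payoff WB_alpha pbar (vl, vh) (\<sigma>s n) L < cl + t
         \<and> payoff WB_alpha pbar (vl, vh) (\<sigma>s n) H > ch + (ES - t))
      \<and> (payoff WB_alpha pbar (vl, vh) \<sigma> L > cl \<longrightarrow>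
           exp_bid pbar (\<sigma>s n L) < exp_bid pbar (\<sigma>s n H)))"
proof -
  have "vh \<le> 2 * pbar" using assms(4,5) by simp
  note bounds = nash_limit_bounds[OF assms(1-3) this assms(6-9)]
  have E_lim: "(\<lambda>n. exp_bid pbar (\<sigma>s n i)) \<longlonglongrightarrow> exp_bid pbar (\<sigma> i)" for i
    by (rule exp_bid_tendsto) (rule assms(9))
  have P_lim: "(\<lambda>n. payoff WB_alpha pbar (vl, vh) (\<sigma>s n) i)
      \<longlonglongrightarrow> payoff WB_alpha pbar (vl, vh) \<sigma> i" for i
    by (rule payoff_tendsto) (rule assms(9))
  show ?thesis
    unfolding Let_def eventually_sequentially[symmetric]
    using eventually_less_if_of_tendsto[OF E_lim tendsto_const bounds(1)]
      order_tendstoD(1)[OF E_lim bounds(2)] order_tendstoD(2)[OF E_lim bounds(3)]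
      order_tendstoD(2)[OF P_lim bounds(4)] order_tendstoD(1)[OF P_lim bounds(5)]
      eventually_less_if_of_tendsto[OF E_lim E_lim bounds(6)]
    by eventually_elim auto
qed

end
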